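(* Let $X$ be an L-space and $U,V\in{\sf ClopUp}(X)$. (1) $\mathrm{core}\,U\subseteq\ker U\subseteq U$. (2) If $U\subseteq V$ then $\mathrm{core}\,U\subseteq\mathrm{core}\,V$. (3) If $X$ is an algebraic L-space, then $X$ is a continuous L-space. (4) $U$ is a Scott upset if and only if $\mathrm{core}\,U=U$.
   Context: A Priestley space is a Stone space $X$ with a partial order such that clopen upsets separate points. An L-space is a Priestley space in which the downset of each clopen set is clopen and the closure of each open upset is open. ${\sf ClopUp}(X)$ is the set of clopen upsets of $X$; $\mathrm{cl}$ denotes closure. The spatial part of $X$ is $Y=\{y\in X\mid{\downarrow}y\text{ is clopen}\}$. A Scott upset is a closed upset $F$ with $\min F\subseteq Y$; ${\sf ClopSUp}(X)$ is the set of clopen Scott upsets. For $U,V\in{\sf ClopUp}(X)$, write $V\ll U$ if for every open upset $W$ of $X$, $U\subseteq\mathrm{cl}\,W$ implies $V\subseteq W$. Define $\ker U=\bigcup\{V\in{\sf ClopUp}(X)\mid V\ll U\}$ and $\mathrm{core}\,U=\bigcup\{V\in{\sf ClopSUp}(X)\mid V\subseteq U\}$. $X$ is a continuous L-space if $\ker U$ is dense in $U$ for all $U\in{\sf ClopUp}(X)$, and an algebraic L-space if $\mathrm{core}\,U$ is dense in $U$ for all $U\in{\sf ClopUp}(X)$. *)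

theory Defs
  imports "HOL-Analysis.Analysis"
begin

definition clopen_in :: "'a topology \<Rightarrow> 'a set \<Rightarrow> bool" where
  "clopen_in T U \<longleftrightarrow> openin T U \<and> closedin T U"

definition stone_space :: "'a topology \<Rightarrow> bool" where
  "stone_space T \<longleftrightarrow> compact_space T \<and> Hausdorff_space T \<and>
     (\<forall>W x. openin T W \<and> x \<in> W \<longrightarrow> (\<exists>C. clopen_in T C \<and> x \<in> C \<and> C \<subseteq> W))"

definition partial_order_on_space :: "'a topology \<Rightarrow> ('a \<Rightarrow> 'a \<Rightarrow> bool) \<Rightarrow> bool" where
  "partial_order_on_space T le \<longleftrightarrow>
     (\<forall>x\<in>topspace T. le x x) \<and>
     (\<forall>x\<in>topspace T. \<forall>y\<in>topspace T. le x y \<and> le y x \<longrightarrow> x = y) \<and>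
     (\<forall>x\<in>topspace T. \<forall>y\<in>topspace T. \<forall>z\<in>topspace T. le x y \<and> le y z \<longrightarrow> le x z)"

definition upset :: "'a topology \<Rightarrow> ('a \<Rightarrow> 'a \<Rightarrow> bool) \<Rightarrow> 'a set \<Rightarrow> bool" where
  "upset T le U \<longleftrightarrow> U \<subseteq> topspace T \<and>
     (\<forall>x\<in>U. \<forall>y\<in>topspace T. le x y \<longrightarrow> y \<in> U)"

definition downset_of :: "'a topology \<Rightarrow> ('a \<Rightarrow> 'a \<Rightarrow> bool) \<Rightarrow> 'a set \<Rightarrow> 'a set" where
  "downset_of T le A = {y \<in> topspace T. \<exists>x\<in>A. le y x}"

definition priestley_space :: "'a topology \<Rightarrow> ('a \<Rightarrow> 'a \<Rightarrow> bool) \<Rightarrow> bool" where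
  "priestley_space T le \<longleftrightarrow> stone_space T \<and> partial_order_on_space T le \<and>
     (\<forall>x\<in>topspace T. \<forall>y\<in>topspace T. \<not> le x y \<longrightarrow>
        (\<exists>U. clopen_in T U \<and> upset T le U \<and> x \<in> U \<and> y \<notin> U))"

definition L_space :: "'a topology \<Rightarrow> ('a \<Rightarrow> 'a \<Rightarrow> bool) \<Rightarrow> bool" where
  "L_space T le \<longleftrightarrow> priestley_space T le \<and>
     (\<forall>U. clopen_in T U \<longrightarrow> clopen_in T (downset_of T le U)) \<and>
     (\<forall>W. openin T W \<and> upset T le W \<longrightarrow> openin T (T closure_of W))"

definition ClopUp :: "'a topology \<Rightarrow> ('a \<Rightarrow> 'a \<Rightarrow> bool) \<Rightarrow> 'a set set" where
  "ClopUp T le = {U. clopen_in T U \<and> upset T le U}"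

definition spatial_part :: "'a topology \<Rightarrow> ('a \<Rightarrow> 'a \<Rightarrow> bool) \<Rightarrow> 'a set" where
  "spatial_part T le = {y \<in> topspace T. clopen_in T (downset_of T le {y})}"

definition min_elems :: "('a \<Rightarrow> 'a \<Rightarrow> bool) \<Rightarrow> 'a set \<Rightarrow> 'a set" where
  "min_elems le F = {x \<in> F. \<forall>y\<in>F. le y x \<longrightarrow> y = x}"

definition scott_upset :: "'a topology \<Rightarrow> ('a \<Rightarrow> 'a \<Rightarrow> bool) \<Rightarrow> 'a set \<Rightarrow> bool" where
  "scott_upset T le F \<longleftrightarrow> closedin T F \<and> upset T le F \<and>
     min_elems le F \<subseteq> spatial_part T le"

definition ClopSUp :: "'a topology \<Rightarrow> ('a \<Rightarrow> 'a \<Rightarrow> bool) \<Rightarrow> 'a set set" where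
  "ClopSUp T le = {U. clopen_in T U \<and> scott_upset T le U}"

definition way_below :: "'a topology \<Rightarrow> ('a \<Rightarrow> 'a \<Rightarrow> bool) \<Rightarrow> 'a set \<Rightarrow> 'a set \<Rightarrow> bool" where
  "way_below T le V U \<longleftrightarrow>
     (\<forall>W. openin T W \<and> upset T le W \<and> U \<subseteq> T closure_of W \<longrightarrow> V \<subseteq> W)"

definition ker :: "'a topology \<Rightarrow> ('a \<Rightarrow> 'a \<Rightarrow> bool) \<Rightarrow> 'a set \<Rightarrow> 'a set" where
  "ker T le U = \<Union>{V \<in> ClopUp T le. way_below T le V U}"

definition core :: "'a topology \<Rightarrow> ('a \<Rightarrow> 'a \<Rightarrow> bool) \<Rightarrow> 'a set \<Rightarrow> 'a set" where
  "core T le U = \<Union>{V \<in> ClopSUp T le. V \<subseteq> U}"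

definition dense_in :: "'a topology \<Rightarrow> 'a set \<Rightarrow> 'a set \<Rightarrow> bool" where
  "dense_in T A U \<longleftrightarrow> U \<subseteq> T closure_of A"

definition continuous_L_space :: "'a topology \<Rightarrow> ('a \<Rightarrow> 'a \<Rightarrow> bool) \<Rightarrow> bool" where
  "continuous_L_space T le \<longleftrightarrow> L_space T le \<and>
     (\<forall>U\<in>ClopUp T le. dense_in T (ker T le U) U)"

definition algebraic_L_space :: "'a topology \<Rightarrow> ('a \<Rightarrow> 'a \<Rightarrow> bool) \<Rightarrow> bool" where
  "algebraic_L_space T le \<longleftrightarrow> L_space T le \<and>
     (\<forall>U\<in>ClopUp T le. dense_in T (core T le U) U)"

end

theory Submission
  imports Defs
begin

text \<open>The substance is \<open>core U \<subseteq> ker U\<close>. Compactness and Zorn's lemma put below every point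
  of a closed set a minimal point of that set (chains have lower bounds because principal downsets
  are closed). For a closed Scott upset \<open>V \<subseteq> U\<close> these minimal points \<open>m\<close> have \<open>\<down>m\<close> open; if
  \<open>U \<subseteq> cl W\<close> for an open upset \<open>W\<close>, the neighbourhood \<open>\<down>m\<close> of \<open>m\<close> meets \<open>W\<close>, so \<open>m \<in> W\<close> and
  hence \<open>V \<subseteq> W\<close>.\<close>

lemma compact_space_Inter_chain_nonempty:
  assumes "compact_space X"
    and "\<And>C. C \<in> \<C> \<Longrightarrow> closedin X C \<and> C \<noteq> {}"
    and "\<And>A B. A \<in> \<C> \<Longrightarrow> B \<in> \<C> \<Longrightarrow> A \<subseteq> B \<or> B \<subseteq> A"
  shows "\<Inter>\<C> \<noteq> {}"
proof -
  have closed: "\<forall>C\<in>\<C>. closedin X C"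
    using assms(2) by blast
  have "\<Inter>\<F> \<noteq> {}" if "finite \<F> \<and> \<F> \<subseteq> \<C>" for \<F>
  proof (cases "\<F> = {}")
    case False
    have "subset.chain \<C> \<F>"
      using that assms(3) by (auto simp: subset_chain_def)
    then have "\<Inter>\<F> \<in> \<C>"
      using Inter_in_chain that False by blast
    then show ?thesis
      using assms(2) by blast
  qed simp
  then show ?thesis
    using compact_space_fip[THEN iffD1, OF assms(1), rule_format, of \<C>] closed by blast
qed

lemma closedin_downset_singleton:
  assumes "priestley_space T le" and "x \<in> topspace T"
  shows "closedin T (downset_of T le {x})"
proof -
  have "\<exists>U. openin T U \<and> y \<in> U \<and> U \<subseteq> topspace T - downset_of T le {x}"
    if "y \<in> topspace T - downset_of T le {x}" for y
  proof -
    have "\<not> le y x" "y \<in> topspace T"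
      using that by (auto simp: downset_of_def)
    then obtain U where "clopen_in T U" "upset T le U" "y \<in> U" "x \<notin> U"
      using assms unfolding priestley_space_def by blast
    then show ?thesis
      using assms(2) unfolding clopen_in_def upset_def downset_of_def by blast
  qed
  then have "openin T (topspace T - downset_of T le {x})"
    using openin_subopen by blast
  then show ?thesis
    by (simp add: closedin_def downset_of_def)
qed

lemma closed_chain_has_lower_bound:
  assumes compact: "compact_space T" and po: "partial_order_on_space T le"
    and closed_down: "\<And>y. y \<in> topspace T \<Longrightarrow> closedin T (downset_of T le {y})"
    and F: "closedin T F" and CF: "C \<subseteq> F" and "C \<noteq> {}"
    and total: "\<And>c d. c \<in> C \<Longrightarrow> d \<in> C \<Longrightarrow> le c d \<or> le d c"
  shows "\<exists>u\<in>F. \<forall>c\<in>C. le u c"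
proof -
  have FT: "F \<subseteq> topspace T"
    using F closedin_subset by blast
  have le_refl: "\<And>a. a \<in> topspace T \<Longrightarrow> le a a"
    and le_trans: "\<And>a b c. a \<in> topspace T \<Longrightarrow> b \<in> topspace T \<Longrightarrow> c \<in> topspace T \<Longrightarrow>
      le a b \<Longrightarrow> le b c \<Longrightarrow> le a c"
    using po unfolding partial_order_on_space_def by blast+
  define \<C> where "\<C> = (\<lambda>c. F \<inter> downset_of T le {c}) ` C"
  have "\<Inter>\<C> \<noteq> {}"
  proof (rule compact_space_Inter_chain_nonempty[OF compact])
    show "closedin T D \<and> D \<noteq> {}" if "D \<in> \<C>" for D
      using that CF FT F closed_down le_refl unfolding \<C>_def downset_of_def by blast
    show "D \<subseteq> E \<or> E \<subseteq> D" if DE: "D \<in> \<C>" "E \<in> \<C>" for D E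
    proof -
      obtain c d where cd: "c \<in> C" "d \<in> C"
        and "D = F \<inter> downset_of T le {c}" "E = F \<inter> downset_of T le {d}"
        using DE unfolding \<C>_def by blast
      moreover have "F \<inter> downset_of T le {a} \<subseteq> F \<inter> downset_of T le {b}"
        if ab: "a \<in> C" "b \<in> C" "le a b" for a b
        using ab CF FT le_trans unfolding downset_of_def by blast
      ultimately show ?thesis
        using total[OF cd] cd by blast
    qed
  qed
  then show ?thesis
    using \<open>C \<noteq> {}\<close> unfolding \<C>_def downset_of_def by auto
qed

lemma ex_min_elems_below:
  assumes compact: "compact_space T" and po: "partial_order_on_space T le"
    and closed_down: "\<And>y. y \<in> topspace T \<Longrightarrow> closedin T (downset_of T le {y})"
    and F: "closedin T F" and "x \<in> F"
  shows "\<exists>m\<in>min_elems le F. le m x"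
proof -
  have FT: "F \<subseteq> topspace T"
    using F closedin_subset by blast
  have le_refl: "\<And>a. a \<in> F \<Longrightarrow> le a a"
    and le_antisym: "\<And>a b. a \<in> F \<Longrightarrow> b \<in> F \<Longrightarrow> le a b \<Longrightarrow> le b a \<Longrightarrow> a = b"
    and le_trans: "\<And>a b c. a \<in> F \<Longrightarrow> b \<in> F \<Longrightarrow> c \<in> F \<Longrightarrow> le a b \<Longrightarrow> le b c \<Longrightarrow> le a c"
    using po FT unfolding partial_order_on_space_def by (meson subsetD)+
  define A where "A = {y \<in> F. le y x}"
  have "\<exists>m\<in>A. \<forall>a\<in>A. le a m \<longrightarrow> a = m"
  proof (rule predicate_Zorn)
    show "partial_order_on A (relation_of (\<lambda>a b. le b a) A)"
      unfolding partial_order_on_def preorder_on_def refl_on_def trans_def antisym_def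
        relation_of_def A_def
      using le_refl le_antisym le_trans by blast
  next
    fix C assume "C \<in> Chains (relation_of (\<lambda>a b. le b a) A)"
    then have CA: "C \<subseteq> A" and total: "\<And>c d. c \<in> C \<Longrightarrow> d \<in> C \<Longrightarrow> le c d \<or> le d c"
      unfolding Chains_def relation_of_def by blast+
    show "\<exists>u\<in>A. \<forall>c\<in>C. le u c"
    proof (cases "C = {}")
      case True
      then show ?thesis
        using \<open>x \<in> F\<close> le_refl A_def by blast
    next
      case False
      have "C \<subseteq> F"
        using CA A_def by blast
      then obtain u where u: "u \<in> F" "\<forall>c\<in>C. le u c"
        using closed_chain_has_lower_bound[OF compact po closed_down F _ False total] by blast
      obtain c where c: "c \<in> C"
        using False by blast
      then have "c \<in> F" "le c x"
        using CA A_def by auto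
      then have "le u x"
        using le_trans[OF \<open>u \<in> F\<close> \<open>c \<in> F\<close> \<open>x \<in> F\<close>] u c by blast
      then show ?thesis
        using u A_def by blast
    qed
  qed
  then obtain m where "m \<in> A" "\<forall>a\<in>A. le a m \<longrightarrow> a = m"
    by blast
  then have "m \<in> min_elems le F"
    using le_trans \<open>x \<in> F\<close> unfolding min_elems_def A_def by blast
  then show ?thesis
    using \<open>m \<in> A\<close> A_def by blast
qed

lemma ker_subset:
  assumes "openin T U" and "upset T le U"
  shows "ker T le U \<subseteq> U"
proof -
  have "U \<subseteq> T closure_of U"
    using assms(2) closure_of_subset by (auto simp: upset_def)
  then show ?thesis
    using assms unfolding ker_def way_below_def by blast
qed

lemma scott_upset_way_below:
  assumes P: "priestley_space T le" and scott: "scott_upset T le V" and "V \<subseteq> U"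
  shows "way_below T le V U"
  unfolding way_below_def
proof (intro allI impI subsetI)
  fix W z
  assume W: "openin T W \<and> upset T le W \<and> U \<subseteq> T closure_of W" and "z \<in> V"
  have compact: "compact_space T" and po: "partial_order_on_space T le"
    using P by (auto simp: priestley_space_def stone_space_def)
  have "closedin T V"
    using scott by (simp add: scott_upset_def)
  then obtain m where m: "m \<in> min_elems le V" "le m z"
    using ex_min_elems_below[OF compact po closedin_downset_singleton[OF P]] \<open>z \<in> V\<close> by blast
  have "m \<in> V" and zT: "z \<in> topspace T"
    using m \<open>z \<in> V\<close> scott by (auto simp: min_elems_def scott_upset_def upset_def)
  then have mT: "m \<in> topspace T"
    using scott by (auto simp: scott_upset_def upset_def)
  have "openin T (downset_of T le {m})"
    using m scott by (auto simp: scott_upset_def spatial_part_def clopen_in_def)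
  moreover have "m \<in> downset_of T le {m}"
    using mT po by (auto simp: downset_of_def partial_order_on_space_def)
  moreover have "m \<in> T closure_of W"
    using W \<open>V \<subseteq> U\<close> \<open>m \<in> V\<close> by blast
  ultimately have "\<exists>w. w \<in> W \<and> w \<in> downset_of T le {m}"
    unfolding in_closure_of by blast
  then obtain w where "w \<in> W" "le w m"
    unfolding downset_of_def by blast
  then have "m \<in> W"
    using W mT by (auto simp: upset_def)
  then show "z \<in> W"
    using W m(2) zT by (auto simp: upset_def)
qed

lemma core_subset_ker:
  assumes "priestley_space T le"
  shows "core T le U \<subseteq> ker T le U"
proof
  fix z assume "z \<in> core T le U"
  then obtain V where V: "V \<in> ClopSUp T le" "V \<subseteq> U" "z \<in> V"
    unfolding core_def by blast
  then have "V \<in> ClopUp T le" and "scott_upset T le V"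
    by (simp_all add: ClopSUp_def ClopUp_def scott_upset_def)
  moreover have "way_below T le V U"
    using scott_upset_way_below[OF assms \<open>scott_upset T le V\<close> V(2)] .
  ultimately show "z \<in> ker T le U"
    using V(3) unfolding ker_def by blast
qed

lemma core_mono:
  assumes "U \<subseteq> V"
  shows "core T le U \<subseteq> core T le V"
  using assms unfolding core_def by blast

lemma algebraic_imp_continuous_L_space:
  assumes "algebraic_L_space T le"
  shows "continuous_L_space T le"
proof -
  have "priestley_space T le"
    using assms by (simp add: algebraic_L_space_def L_space_def)
  then have "T closure_of core T le U \<subseteq> T closure_of ker T le U" for U
    by (simp add: closure_of_mono core_subset_ker)
  then show ?thesis
    using assms unfolding algebraic_L_space_def continuous_L_space_def dense_in_def by blast
qed

lemma scott_upset_iff_core_eq: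
  assumes "U \<in> ClopUp T le"
  shows "scott_upset T le U \<longleftrightarrow> core T le U = U"
proof
  assume "scott_upset T le U"
  then have "U \<in> ClopSUp T le"
    using assms by (simp add: ClopSUp_def ClopUp_def)
  then show "core T le U = U"
    unfolding core_def by blast
next
  assume core_eq: "core T le U = U"
  have "m \<in> spatial_part T le" if m: "m \<in> min_elems le U" for m
  proof -
    obtain W where "W \<in> ClopSUp T le" "W \<subseteq> U" "m \<in> W"
      using m core_eq unfolding core_def min_elems_def by blast
    moreover from this have "m \<in> min_elems le W"
      using m by (auto simp: min_elems_def)
    ultimately show ?thesis
      by (auto simp: ClopSUp_def scott_upset_def)
  qed
  then show "scott_upset T le U"
    using assms by (auto simp: scott_upset_def ClopUp_def clopen_in_def)
qed

theorem lemma4p2: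
  fixes T :: "'a topology" and le :: "'a \<Rightarrow> 'a \<Rightarrow> bool" and U V :: "'a set"
  assumes "L_space T le"
    and "U \<in> ClopUp T le" and "V \<in> ClopUp T le"
  shows "(core T le U \<subseteq> ker T le U \<and> ker T le U \<subseteq> U)
    \<and> (U \<subseteq> V \<longrightarrow> core T le U \<subseteq> core T le V)
    \<and> (algebraic_L_space T le \<longrightarrow> continuous_L_space T le)
    \<and> (scott_upset T le U \<longleftrightarrow> core T le U = U)"
proof (intro conjI impI)
  have "priestley_space T le"
    using assms(1) by (simp add: L_space_def)
  then show "core T le U \<subseteq> ker T le U"
    by (rule core_subset_ker)
  show "ker T le U \<subseteq> U"
    using assms(2) by (intro ker_subset) (auto simp: ClopUp_def clopen_in_def)
  show "core T le U \<subseteq> core T le V" if "U \<subseteq> V"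
    using that by (rule core_mono)
  show "continuous_L_space T le" if "algebraic_L_space T le"
    using that by (rule algebraic_imp_continuous_L_space)
  show "scott_upset T le U \<longleftrightarrow> core T le U = U"
    using assms(2) by (rule scott_upset_iff_core_eq)
qed

end
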